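(* Let $M$ be a finite abelian group of exponent greater than $2$ and let $f$ be a half-automorphism of $L_M$. Then for every $x\in M$ there is a unique $f''(x)\in M$ with $f(1,x)=(1,f''(x))$, and the map $f'':M\to M$ is an automorphism of $M$.
   Context: Let $K=\{1,a,b,c\}$ be the Klein four-group. Set $L_M=K\times M$ with the operation $(A,x)*(B,y)=(AB,xy)$ if $B=1$, and $(A,x)*(B,y)=(AB,x^{-1}y)$ if $B\neq 1$. A half-automorphism of a loop $L$ is a bijection $f:L\to L$ such that $f(XY)\in\{f(X)f(Y),f(Y)f(X)\}$ for all $X,Y\in L$. *)

theory Defs
  imports "HOL-Algebra.Algebra"
begin

datatype klein = K1 | Ka | Kb | Kc

fun kmult :: "klein \<Rightarrow> klein \<Rightarrow> klein" where
  "kmult K1 y = y"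
| "kmult x K1 = x"
| "kmult Ka Ka = K1" | "kmult Kb Kb = K1" | "kmult Kc Kc = K1"
| "kmult Ka Kb = Kc" | "kmult Kb Ka = Kc"
| "kmult Ka Kc = Kb" | "kmult Kc Ka = Kb"
| "kmult Kb Kc = Ka" | "kmult Kc Kb = Ka"

definition group_exponent :: "('a, 'b) monoid_scheme \<Rightarrow> nat" where
  "group_exponent G = (LEAST n. 0 < n \<and> (\<forall>x\<in>carrier G. x [^]\<^bsub>G\<^esub> n = \<one>\<^bsub>G\<^esub>))"

definition LM_carrier :: "('a, 'b) monoid_scheme \<Rightarrow> (klein \<times> 'a) set" where
  "LM_carrier M = UNIV \<times> carrier M"

definition LM_mult :: "('a, 'b) monoid_scheme \<Rightarrow> klein \<times> 'a \<Rightarrow> klein \<times> 'a \<Rightarrow> klein \<times> 'a" where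
  "LM_mult M p q =
     (if fst q = K1 then (kmult (fst p) (fst q), monoid.mult M (snd p) (snd q))
      else (kmult (fst p) (fst q), monoid.mult M (m_inv M (snd p)) (snd q)))"

definition half_automorphism :: "'c set \<Rightarrow> ('c \<Rightarrow> 'c \<Rightarrow> 'c) \<Rightarrow> ('c \<Rightarrow> 'c) \<Rightarrow> bool" where
  "half_automorphism S m f \<longleftrightarrow> bij_betw f S S \<and>
     (\<forall>u\<in>S. \<forall>v\<in>S. f (m u v) \<in> {m (f u) (f v), m (f v) (f u)})"

end

theory Submission
  imports Defs
begin

text \<open>
  Squaring in \<open>L\<^sub>M\<close> sends every element \<open>(A, w)\<close> with \<open>A \<noteq> 1\<close> to the identity, while
  \<open>(1, x)\<^sup>2 = (1, x\<^sup>2)\<close>. A half-automorphism commutes with squaring and is injective, so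
  it fixes the identity and maps every \<open>(1, x)\<close> with \<open>x\<^sup>2 \<noteq> 1\<close> into \<open>1 \<times> M\<close>. Because the
  exponent exceeds 2, some \<open>z\<close> has \<open>z\<^sup>2 \<noteq> 1\<close>, and any \<open>x\<close> with \<open>x\<^sup>2 = 1\<close> is \<open>z \<cdot> z\<inverse>x\<close>
  with \<open>(z\<inverse>x)\<^sup>2 \<noteq> 1\<close>; as \<open>1 \<times> M\<close> is closed under products, \<open>f\<close> preserves \<open>1 \<times> M\<close>.
  On \<open>1 \<times> M\<close> the loop is the abelian group \<open>M\<close>, where both candidate values
  \<open>f(u)f(v)\<close> and \<open>f(v)f(u)\<close> coincide, and an injective endomorphism of a finite group
  is an automorphism.
\<close>

lemma kmult_self [simp]: "kmult A A = K1"
  by (cases A) auto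

lemma mem_LM_carrier [simp]: "(A, x) \<in> LM_carrier M \<longleftrightarrow> x \<in> carrier M"
  by (simp add: LM_carrier_def)

lemma LM_mult_K1 [simp]: "LM_mult M (K1, x) (K1, y) = (K1, x \<otimes>\<^bsub>M\<^esub> y)"
  by (simp add: LM_mult_def)

lemma (in group) LM_mult_square:
  assumes "w \<in> carrier G"
  shows "LM_mult G (A, w) (A, w) = (if A = K1 then (K1, w \<otimes> w) else (K1, \<one>))"
  using assms by (simp add: LM_mult_def)

lemma half_automorphism_square:
  assumes "half_automorphism S m f" and "u \<in> S"
  shows "f (m u u) = m (f u) (f u)"
  using assms unfolding half_automorphism_def by fastforce

lemma (in monoid) exists_square_ne_one_if_exponent_gt_2:
  assumes "group_exponent G > 2"
  obtains z where "z \<in> carrier G" and "z \<otimes> z \<noteq> \<one>"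
proof -
  have "\<exists>z\<in>carrier G. z \<otimes> z \<noteq> \<one>"
  proof (rule ccontr)
    assume "\<not> ?thesis"
    then have "\<forall>x\<in>carrier G. x [^] (2::nat) = \<one>"
      by (simp add: numeral_2_eq_2)
    then have "group_exponent G \<le> 2"
      unfolding group_exponent_def by (intro Least_le) simp
    with assms show False by simp
  qed
  with that show ?thesis by blast
qed

lemma (in comm_group) square_one_as_product_of_square_ne_one:
  assumes "z \<in> carrier G" and "z \<otimes> z \<noteq> \<one>" and "x \<in> carrier G" and "x \<otimes> x = \<one>"
  obtains y where "y \<in> carrier G" and "y \<otimes> y \<noteq> \<one>" and "x = z \<otimes> y"
proof
  show "inv z \<otimes> x \<in> carrier G" using assms by simp
  have "(inv z \<otimes> x) \<otimes> (inv z \<otimes> x) = inv (z \<otimes> z) \<otimes> (x \<otimes> x)"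
    using assms(1,3) by (simp add: inv_mult m_ac)
  with assms show "(inv z \<otimes> x) \<otimes> (inv z \<otimes> x) \<noteq> \<one>"
    by simp
  show "x = z \<otimes> (inv z \<otimes> x)"
    using assms by (simp add: m_assoc [symmetric])
qed

lemma (in group) inj_endomorphism_iso:
  assumes "finite (carrier G)" and "h \<in> hom G G" and "inj_on h (carrier G)"
  shows "h \<in> iso G G"
proof -
  have "h ` carrier G \<subseteq> carrier G"
    using assms(2) by (auto simp: hom_def)
  with assms have "h ` carrier G = carrier G"
    by (intro endo_inj_surj)
  with assms show ?thesis
    by (simp add: iso_def bij_betw_def)
qed

locale LM_half_automorphism = comm_group M for M :: "('a, 'b) monoid_scheme" (structure) +
  fixes f :: "klein \<times> 'a \<Rightarrow> klein \<times> 'a"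
  assumes half_automorphism: "half_automorphism (LM_carrier M) (LM_mult M) f"
begin

lemma f_closed: "u \<in> LM_carrier M \<Longrightarrow> f u \<in> LM_carrier M"
  using half_automorphism bij_betwE unfolding half_automorphism_def by blast

lemma f_inj_on: "inj_on f (LM_carrier M)"
  using half_automorphism unfolding half_automorphism_def bij_betw_def by blast

lemma f_mult:
  assumes "u \<in> LM_carrier M" and "v \<in> LM_carrier M"
  shows "f (LM_mult M u v) \<in> {LM_mult M (f u) (f v), LM_mult M (f v) (f u)}"
  using half_automorphism assms unfolding half_automorphism_def by blast

lemma f_square: "u \<in> LM_carrier M \<Longrightarrow> f (LM_mult M u u) = LM_mult M (f u) (f u)"
  using half_automorphism_square [OF half_automorphism] .

lemma f_K1_one: "f (K1, \<one>) = (K1, \<one>)"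
proof -
  obtain A w where Aw: "f (K1, \<one>) = (A, w)"
    by (cases "f (K1, \<one>)")
  have w: "w \<in> carrier M"
    using f_closed [of "(K1, \<one>)"] Aw by simp
  have "(A, w) = LM_mult M (A, w) (A, w)"
    using f_square [of "(K1, \<one>)"] Aw by simp
  then have "A = K1" and "w = w \<otimes> w"
    using w by (auto simp: LM_mult_square split: if_splits)
  moreover from \<open>w = w \<otimes> w\<close> have "w = \<one>"
    using w by (metis l_cancel_one r_one)
  ultimately show ?thesis
    using Aw by simp
qed

lemma fst_f_K1_if_square_ne_one:
  assumes x: "x \<in> carrier M" and "x \<otimes> x \<noteq> \<one>"
  shows "fst (f (K1, x)) = K1"
proof (rule ccontr)
  assume ne: "fst (f (K1, x)) \<noteq> K1"
  obtain A w where Aw: "f (K1, x) = (A, w)"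
    by (cases "f (K1, x)")
  have "w \<in> carrier M"
    using f_closed [of "(K1, x)"] Aw x by simp
  then have "f (K1, x \<otimes> x) = f (K1, \<one>)"
    using f_square [of "(K1, x)"] x Aw ne by (simp add: LM_mult_square f_K1_one)
  then have "x \<otimes> x = \<one>"
    using inj_onD [OF f_inj_on] x by fastforce
  with assms show False by simp
qed

lemma fst_f_K1:
  assumes "group_exponent M > 2" and x: "x \<in> carrier M"
  shows "fst (f (K1, x)) = K1"
proof (cases "x \<otimes> x = \<one>")
  case False
  with x show ?thesis by (rule fst_f_K1_if_square_ne_one)
next
  case True
  obtain z where z: "z \<in> carrier M" "z \<otimes> z \<noteq> \<one>"
    using exists_square_ne_one_if_exponent_gt_2 [OF assms(1)] .
  obtain y where y: "y \<in> carrier M" "y \<otimes> y \<noteq> \<one>" and xzy: "x = z \<otimes> y"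
    using square_one_as_product_of_square_ne_one [OF z x True] .
  have "f (K1, x) \<in> {LM_mult M (f (K1, z)) (f (K1, y)), LM_mult M (f (K1, y)) (f (K1, z))}"
    using f_mult [of "(K1, z)" "(K1, y)"] z y xzy by simp
  moreover have "fst (f (K1, z)) = K1" and "fst (f (K1, y)) = K1"
    using fst_f_K1_if_square_ne_one z y by blast+
  ultimately show ?thesis
    by (auto simp: LM_mult_def)
qed

definition f'' :: "'a \<Rightarrow> 'a" where
  "f'' x = (THE y. y \<in> carrier M \<and> f (K1, x) = (K1, y))"

context
  assumes exponent: "group_exponent M > 2"
begin

lemma f_K1_unique:
  assumes "x \<in> carrier M"
  shows "\<exists>!y. y \<in> carrier M \<and> f (K1, x) = (K1, y)"
proof -
  have "f (K1, x) = (K1, snd (f (K1, x)))"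
    using fst_f_K1 [OF exponent assms] by (metis prod.collapse)
  moreover have "snd (f (K1, x)) \<in> carrier M"
    using f_closed [of "(K1, x)"] assms by (cases "f (K1, x)") simp
  ultimately show ?thesis by auto
qed

lemma f''_closed: "x \<in> carrier M \<Longrightarrow> f'' x \<in> carrier M"
  and f_K1_eq: "x \<in> carrier M \<Longrightarrow> f (K1, x) = (K1, f'' x)"
  unfolding f''_def using theI' [OF f_K1_unique] by blast+

lemma f''_mult:
  assumes "x \<in> carrier M" and "y \<in> carrier M"
  shows "f'' (x \<otimes> y) = f'' x \<otimes> f'' y"
proof -
  have "(K1, f'' (x \<otimes> y)) \<in> {(K1, f'' x \<otimes> f'' y), (K1, f'' y \<otimes> f'' x)}"
    using f_mult [of "(K1, x)" "(K1, y)"] assms by (simp add: f_K1_eq)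
  then show ?thesis
    using assms by (auto simp: f''_closed m_comm)
qed

lemma f''_hom: "f'' \<in> hom M M"
  by (rule homI) (simp_all add: f''_closed f''_mult)

lemma f''_inj_on: "inj_on f'' (carrier M)"
proof (rule inj_onI)
  fix x y
  assume "x \<in> carrier M" "y \<in> carrier M" "f'' x = f'' y"
  then have "f (K1, x) = f (K1, y)"
    by (simp add: f_K1_eq)
  with \<open>x \<in> carrier M\<close> \<open>y \<in> carrier M\<close> show "x = y"
    using inj_onD [OF f_inj_on] by fastforce
qed

end

end

theorem proposition4p9:
  fixes M :: "('a, 'b) monoid_scheme" and f :: "klein \<times> 'a \<Rightarrow> klein \<times> 'a"
  assumes "comm_group M" and "finite (carrier M)"
    and "group_exponent M > 2"
    and "half_automorphism (LM_carrier M) (LM_mult M) f"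
  shows "(\<forall>x\<in>carrier M. \<exists>!y. y \<in> carrier M \<and> f (K1, x) = (K1, y))
         \<and> (\<lambda>x. THE y. y \<in> carrier M \<and> f (K1, x) = (K1, y)) \<in> iso M M"
proof -
  interpret LM_half_automorphism M f
    using assms(1,4) by (simp add: LM_half_automorphism_def LM_half_automorphism_axioms_def)
  have "f'' \<in> iso M M"
    using inj_endomorphism_iso assms(2) f''_hom [OF assms(3)] f''_inj_on [OF assms(3)] .
  then show ?thesis
    using f_K1_unique [OF assms(3)] unfolding f''_def [abs_def] by blast
qed

end
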